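(* Let $L,M$ be distributive lattices and $T:\mathrm{FBL}\langle L\rangle\to\mathrm{FBL}\langle M\rangle$ a (linear) lattice homomorphism, and define $\Phi_T:M^*\to\mathbb R^L$ by $\Phi_T(y^* )(x)=(T\delta_x)(y^* )$. Then: (1) $\Phi_T$ is continuous when $M^*$ and $\mathbb R^L$ carry the product topologies; (2) if $T$ has dense range and $\|T\|\le1$, then $\Phi_T$ is injective; (3) if $T$ is an isometric lattice isomorphism onto $\mathrm{FBL}\langle M\rangle$, then $\Phi_T$ is a bijection from $M^*$ onto $L^*$ and $\Phi_{T^{-1}}=(\Phi_T)^{-1}$; (4) for all $y_1^*,\dots,y_m^*\in M^*$, $\sup_{x\in L}\sum_{i=1}^m|\Phi_T(y_i^* )(x)|\le\|T\|\sup_{y\in M}\sum_{i=1}^m|y_i^*(y)|$.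
   Context: For a distributive lattice $L$, $L^*$ is the set of all lattice homomorphisms $x^*:L\to[-1,1]$, a subset of $\mathbb R^L$ with the product topology; for $x\in L$, $\delta_x:L^*\to\mathbb R$ is $\delta_x(x^* )=x^*(x)$. A function $f:L^*\to\mathbb R$ is positively homogeneous if $f(\lambda x^* )=\lambda f(x^* )$ whenever $\lambda\ge0$ and $\lambda x^*\in L^*$; for such $f$, $\|f\|=\sup\{\sum_{i=1}^m|f(x_i^* )|: m\in\mathbb N,\ x_i^*\in L^*,\ \sup_{x\in L}\sum_{i=1}^m|x_i^*(x)|\le1\}$. $\mathrm{FBL}\langle L\rangle$ is the norm closure of the vector sublattice generated by $\{\delta_x:x\in L\}$ inside the Banach lattice of positively homogeneous functions on $L^*$ with finite norm, with pointwise order and operations; its elements are continuous functions on $L^*$. *)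

theory Defs
  imports "HOL-Analysis.Analysis"
begin

definition lstar :: "('a::distrib_lattice \<Rightarrow> real) set" where
  "lstar = {h. (\<forall>x. -1 \<le> h x \<and> h x \<le> 1)
              \<and> (\<forall>x y. h (sup x y) = max (h x) (h y))
              \<and> (\<forall>x y. h (inf x y) = min (h x) (h y))}"

text \<open>Functions on L^* are encoded as functions on all of 'a \<Rightarrow> real that vanish off L^*.\<close>
definition delta :: "'a::distrib_lattice \<Rightarrow> ('a \<Rightarrow> real) \<Rightarrow> real" where
  "delta x = (\<lambda>h. if h \<in> lstar then h x else 0)"

definition pos_homog :: "(('a::distrib_lattice \<Rightarrow> real) \<Rightarrow> real) \<Rightarrow> bool" where
  "pos_homog f \<longleftrightarrow>
     (\<forall>c h. c \<ge> 0 \<and> h \<in> lstar \<and> (\<lambda>x. c * h x) \<in> lstar \<longrightarrow> f (\<lambda>x. c * h x) = c * f h)"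

definition fbl_norm :: "(('a::distrib_lattice \<Rightarrow> real) \<Rightarrow> real) \<Rightarrow> ereal" where
  "fbl_norm f = Sup {ereal (\<Sum>i<m. \<bar>f (hs i)\<bar>) | (m::nat) hs.
                      (\<forall>i<m. hs i \<in> lstar) \<and> (\<forall>x. (\<Sum>i<m. \<bar>hs i x\<bar>) \<le> 1)}"

definition ph_space :: "(('a::distrib_lattice \<Rightarrow> real) \<Rightarrow> real) set" where
  "ph_space = {f. (\<forall>h. h \<notin> lstar \<longrightarrow> f h = 0) \<and> pos_homog f \<and> fbl_norm f < \<infinity>}"

inductive_set fbl_gen :: "(('a::distrib_lattice \<Rightarrow> real) \<Rightarrow> real) set" where
  gen_delta: "delta x \<in> fbl_gen"
| gen_add: "f \<in> fbl_gen \<Longrightarrow> g \<in> fbl_gen \<Longrightarrow> (\<lambda>h. f h + g h) \<in> fbl_gen"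
| gen_scale: "f \<in> fbl_gen \<Longrightarrow> (\<lambda>h. c * f h) \<in> fbl_gen"
| gen_max: "f \<in> fbl_gen \<Longrightarrow> g \<in> fbl_gen \<Longrightarrow> (\<lambda>h. max (f h) (g h)) \<in> fbl_gen"
| gen_min: "f \<in> fbl_gen \<Longrightarrow> g \<in> fbl_gen \<Longrightarrow> (\<lambda>h. min (f h) (g h)) \<in> fbl_gen"

definition FBL :: "(('a::distrib_lattice \<Rightarrow> real) \<Rightarrow> real) set" where
  "FBL = {f \<in> ph_space. \<forall>e>0. \<exists>g\<in>fbl_gen. fbl_norm (\<lambda>h. f h - g h) < ereal e}"

definition fbl_lattice_hom ::
  "((('a::distrib_lattice \<Rightarrow> real) \<Rightarrow> real) \<Rightarrow> (('b::distrib_lattice \<Rightarrow> real) \<Rightarrow> real)) \<Rightarrow> bool" where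
  "fbl_lattice_hom T \<longleftrightarrow>
     (\<forall>f\<in>FBL. T f \<in> FBL)
   \<and> (\<forall>f\<in>FBL. \<forall>g\<in>FBL. T (\<lambda>h. f h + g h) = (\<lambda>k. T f k + T g k))
   \<and> (\<forall>c. \<forall>f\<in>FBL. T (\<lambda>h. c * f h) = (\<lambda>k. c * T f k))
   \<and> (\<forall>f\<in>FBL. \<forall>g\<in>FBL. T (\<lambda>h. max (f h) (g h)) = (\<lambda>k. max (T f k) (T g k)))"

definition op_norm ::
  "((('a::distrib_lattice \<Rightarrow> real) \<Rightarrow> real) \<Rightarrow> (('b::distrib_lattice \<Rightarrow> real) \<Rightarrow> real)) \<Rightarrow> ereal" where
  "op_norm T = (SUP f\<in>{f\<in>FBL. fbl_norm f \<le> 1}. fbl_norm (T f))"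

definition Phi ::
  "((('a::distrib_lattice \<Rightarrow> real) \<Rightarrow> real) \<Rightarrow> (('b::distrib_lattice \<Rightarrow> real) \<Rightarrow> real))
     \<Rightarrow> ('b \<Rightarrow> real) \<Rightarrow> ('a \<Rightarrow> real)" where
  "Phi T = (\<lambda>k x. T (delta x) k)"

end

theory Submission
  imports Defs
begin

text \<open>
  A real-valued lattice homomorphism \<phi> on FBL\<langle>L\<rangle> with \<bar>\<phi> f\<bar> \<le> \<parallel>f\<parallel> is evaluation at the
  point x \<mapsto> \<phi> (\<delta> x) of L*: evaluation at that point agrees with \<phi> on the generators \<delta> x,
  hence on the vector sublattice they generate, hence on its norm closure. For y* \<in> M* the point
  attached to f \<mapsto> (T f)(y*) is \<Phi> T y*, so for contractive T (which \<parallel>T\<parallel> \<le> 1 gives after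
  rescaling) we get (T f)(y*) = f(\<Phi> T y*) for every f. If \<Phi> T identifies two points of M*,
  evaluation at them therefore agrees on the range of T, which is dense, hence on every \<delta> y; and
  for an isometric isomorphism the identity applied to T and to its inverse makes the two maps
  \<Phi> mutually inverse. Continuity holds because each coordinate T (\<delta> x) of \<Phi> T is a uniform
  limit on L* of lattice expressions in the \<delta>'s. For the norm estimate, positive homogeneity
  lets us rescale y1*, \<dots>, ym* into a family admissible in the definition of the norm of
  T (\<delta> x), which is at most \<parallel>T\<parallel>.
\<close>

section \<open>The norm on positively homogeneous functions\<close>

definition fbl_admissible :: "nat \<Rightarrow> (nat \<Rightarrow> 'a::distrib_lattice \<Rightarrow> real) \<Rightarrow> bool" where
  "fbl_admissible m hs \<longleftrightarrow> (\<forall>i<m. hs i \<in> lstar) \<and> (\<forall>x. (\<Sum>i<m. \<bar>hs i x\<bar>) \<le> 1)"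

lemma sum_abs_le_fbl_norm:
  "fbl_admissible m hs \<Longrightarrow> ereal (\<Sum>i<m. \<bar>f (hs i)\<bar>) \<le> fbl_norm f"
  unfolding fbl_norm_def fbl_admissible_def by (rule Sup_upper) blast

lemma fbl_norm_leI:
  "(\<And>m hs. fbl_admissible m hs \<Longrightarrow> (\<Sum>i<m. \<bar>f (hs i)\<bar>) \<le> r) \<Longrightarrow> fbl_norm f \<le> ereal r"
  unfolding fbl_norm_def fbl_admissible_def by (rule Sup_least) auto

lemma fbl_norm_nonneg: "0 \<le> fbl_norm f"
  using sum_abs_le_fbl_norm[of 0 "\<lambda>_ _. 0" f] by (simp add: fbl_admissible_def zero_ereal_def)

lemma lstar_abs_le_1: "h \<in> lstar \<Longrightarrow> \<bar>h x\<bar> \<le> 1"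
  unfolding lstar_def abs_le_iff by auto

lemma abs_le_fbl_norm: "h \<in> lstar \<Longrightarrow> ereal \<bar>f h\<bar> \<le> fbl_norm f"
  using sum_abs_le_fbl_norm[of 1 "\<lambda>_. h" f] by (simp add: fbl_admissible_def lstar_abs_le_1)

lemma abs_less_of_fbl_norm_less: "h \<in> lstar \<Longrightarrow> fbl_norm f < ereal e \<Longrightarrow> \<bar>f h\<bar> < e"
  using le_less_trans[OF abs_le_fbl_norm[of h f], of "ereal e"] by simp

lemma fbl_norm_le_lincomb:
  fixes u v w :: "('a::distrib_lattice \<Rightarrow> real) \<Rightarrow> real"
  assumes "fbl_norm v \<le> ereal p" "fbl_norm w \<le> ereal q" "0 \<le> a" "0 \<le> b"
    and "\<forall>h\<in>lstar. \<bar>u h\<bar> \<le> a * \<bar>v h\<bar> + b * \<bar>w h\<bar>"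
  shows "fbl_norm u \<le> ereal (a * p + b * q)"
proof (rule fbl_norm_leI)
  fix m and hs :: "nat \<Rightarrow> 'a \<Rightarrow> real" assume adm: "fbl_admissible m hs"
  have "(\<Sum>i<m. \<bar>v (hs i)\<bar>) \<le> p" "(\<Sum>i<m. \<bar>w (hs i)\<bar>) \<le> q"
    using order_trans[OF sum_abs_le_fbl_norm[OF adm] assms(1)]
      order_trans[OF sum_abs_le_fbl_norm[OF adm] assms(2)] by simp_all
  moreover have "(\<Sum>i<m. \<bar>u (hs i)\<bar>) \<le> a * (\<Sum>i<m. \<bar>v (hs i)\<bar>) + b * (\<Sum>i<m. \<bar>w (hs i)\<bar>)"
    using adm assms(5) unfolding sum_distrib_left sum.distrib[symmetric]
    by (intro sum_mono) (auto simp: fbl_admissible_def)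
  ultimately show "(\<Sum>i<m. \<bar>u (hs i)\<bar>) \<le> a * p + b * q"
    using assms(3,4) by (smt (verit) mult_left_mono)
qed

lemma fbl_norm_le_scaled:
  assumes "fbl_norm v \<le> ereal p" "0 \<le> a" "\<forall>h\<in>lstar. \<bar>u h\<bar> \<le> a * \<bar>v h\<bar>"
  shows "fbl_norm u \<le> ereal (a * p)"
  using fbl_norm_le_lincomb[OF assms(1,1,2), of 0 u] assms(3) by simp

lemma lstar_scale:
  assumes "h \<in> lstar" "0 \<le> c" "\<And>x. \<bar>c * h x\<bar> \<le> 1"
  shows "(\<lambda>x. c * h x) \<in> lstar"
  using assms unfolding lstar_def
  by (auto simp: abs_le_iff max_mult_distrib_left min_mult_distrib_left)

lemma sum_abs_le_fbl_norm_mult: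
  fixes m :: nat
  assumes f: "pos_homog f" and ys: "\<forall>i<m. ys i \<in> lstar"
    and bound: "\<And>y. (\<Sum>i<m. \<bar>ys i y\<bar>) \<le> S"
  shows "ereal (\<Sum>i<m. \<bar>f (ys i)\<bar>) \<le> fbl_norm f * ereal S"
proof -
  have ys_le: "\<bar>ys i y\<bar> \<le> S" if "i < m" for i y
  proof -
    have "\<bar>ys i y\<bar> \<le> (\<Sum>i<m. \<bar>ys i y\<bar>)" using that by (intro member_le_sum) auto
    then show ?thesis using bound[of y] by linarith
  qed
  have f_scale: "f (\<lambda>y. c * h y) = c * f h" if "0 \<le> c" "h \<in> lstar" "(\<lambda>y. c * h y) \<in> lstar" for c h
    using f that unfolding pos_homog_def by blast
  show ?thesis
  proof (cases "S = 0")
    case True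
    have "ys i = (\<lambda>y. 0)" if "i < m" for i
      using ys_le[OF that] True by (simp add: fun_eq_iff)
    then have "f (ys i) = 0" if "i < m" for i
      using f_scale[of 0 "ys i"] ys that by auto
    then show ?thesis using True by (simp add: zero_ereal_def[symmetric])
  next
    case False
    moreover have "0 \<le> S"
      using bound[of undefined] by (meson abs_ge_zero order_trans sum_nonneg)
    ultimately have S: "0 < S" by simp
    define hs where "hs i = (\<lambda>y. (1 / S) * ys i y)" for i
    have hs: "hs i \<in> lstar" if "i < m" for i
      unfolding hs_def using ys that S ys_le[OF that]
      by (intro lstar_scale) (auto simp: abs_mult field_simps)
    have adm: "fbl_admissible m hs"
      unfolding fbl_admissible_def
    proof (intro conjI allI impI hs)
      fix y
      have "(\<Sum>i<m. \<bar>hs i y\<bar>) = (1 / S) * (\<Sum>i<m. \<bar>ys i y\<bar>)"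
        using S by (simp add: hs_def abs_mult sum_distrib_left)
      also have "\<dots> \<le> (1 / S) * S"
        using bound[of y] S by (intro mult_left_mono) auto
      finally show "(\<Sum>i<m. \<bar>hs i y\<bar>) \<le> 1" using S by simp
    qed
    have "f (ys i) = S * f (hs i)" if "i < m" for i
    proof -
      have "ys i = (\<lambda>y. S * hs i y)" using S by (simp add: hs_def)
      then show ?thesis using f_scale[of S "hs i"] S hs[OF that] ys that by auto
    qed
    then have "(\<Sum>i<m. \<bar>f (ys i)\<bar>) = S * (\<Sum>i<m. \<bar>f (hs i)\<bar>)"
      using S by (simp add: abs_mult sum_distrib_left)
    then have "ereal (\<Sum>i<m. \<bar>f (ys i)\<bar>) = ereal (\<Sum>i<m. \<bar>f (hs i)\<bar>) * ereal S"
      by (simp add: mult.commute)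
    also have "\<dots> \<le> fbl_norm f * ereal S"
      using adm S by (intro ereal_mult_right_mono sum_abs_le_fbl_norm) auto
    finally show ?thesis .
  qed
qed

section \<open>Closure properties of FBL\<close>

lemma ph_spaceI:
  assumes "\<And>h. h \<notin> lstar \<Longrightarrow> f h = 0"
    and "\<And>c h. 0 \<le> c \<Longrightarrow> h \<in> lstar \<Longrightarrow> (\<lambda>x. c * h x) \<in> lstar \<Longrightarrow> f (\<lambda>x. c * h x) = c * f h"
    and "fbl_norm f \<le> ereal p"
  shows "f \<in> ph_space"
  using assms unfolding ph_space_def pos_homog_def
  by (auto intro: le_less_trans[OF assms(3)])

lemma ph_space_vanishes: "f \<in> ph_space \<Longrightarrow> h \<notin> lstar \<Longrightarrow> f h = 0"
  unfolding ph_space_def by auto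

lemma ph_space_homog:
  "f \<in> ph_space \<Longrightarrow> 0 \<le> c \<Longrightarrow> h \<in> lstar \<Longrightarrow> (\<lambda>x. c * h x) \<in> lstar \<Longrightarrow> f (\<lambda>x. c * h x) = c * f h"
  unfolding ph_space_def pos_homog_def by auto

lemma ph_space_fbl_norm_bounded: "f \<in> ph_space \<Longrightarrow> \<exists>p. fbl_norm f \<le> ereal p"
  unfolding ph_space_def by (cases "fbl_norm f") auto

lemma FBL_ph_space: "f \<in> FBL \<Longrightarrow> f \<in> ph_space"
  unfolding FBL_def by auto

lemma FBL_approx:
  assumes "f \<in> FBL" "0 < e"
  shows "\<exists>g\<in>fbl_gen. \<exists>p<e. fbl_norm (\<lambda>h. f h - g h) \<le> ereal p"
proof -
  obtain g where g: "g \<in> fbl_gen" "fbl_norm (\<lambda>h. f h - g h) < ereal e"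
    using assms unfolding FBL_def by blast
  moreover obtain p where "fbl_norm (\<lambda>h. f h - g h) = ereal p"
    using g(2) fbl_norm_nonneg[of "\<lambda>h. f h - g h"] by (cases "fbl_norm (\<lambda>h. f h - g h)") auto
  ultimately show ?thesis by (intro bexI[of _ g] exI[of _ p]) auto
qed

lemma FBL_binop:
  fixes F :: "real \<Rightarrow> real \<Rightarrow> real" and K :: real and f g :: "('a::distrib_lattice \<Rightarrow> real) \<Rightarrow> real"
  assumes F_zero: "F 0 0 = 0"
    and F_homog: "\<And>c a b. 0 \<le> c \<Longrightarrow> F (c * a) (c * b) = c * F a b"
    and F_lipschitz: "\<And>a b a' b'. \<bar>F a b - F a' b'\<bar> \<le> K * \<bar>a - a'\<bar> + K * \<bar>b - b'\<bar>"
    and F_gen: "\<And>u v :: ('a \<Rightarrow> real) \<Rightarrow> real.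
                  u \<in> fbl_gen \<Longrightarrow> v \<in> fbl_gen \<Longrightarrow> (\<lambda>h. F (u h) (v h)) \<in> fbl_gen"
    and f: "f \<in> FBL" and g: "g \<in> FBL"
  shows "(\<lambda>h. F (f h) (g h)) \<in> FBL"
proof -
  have K: "0 \<le> K" using F_lipschitz[of 0 0 0 1] by simp
  have f_ph: "f \<in> ph_space" and g_ph: "g \<in> ph_space"
    using f g by (simp_all add: FBL_ph_space)
  obtain p q where p: "fbl_norm f \<le> ereal p" and q: "fbl_norm g \<le> ereal q"
    using ph_space_fbl_norm_bounded f_ph g_ph by blast
  have "(\<lambda>h. F (f h) (g h)) \<in> ph_space"
  proof (rule ph_spaceI)
    show "fbl_norm (\<lambda>h. F (f h) (g h)) \<le> ereal (K * p + K * q)"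
      by (rule fbl_norm_le_lincomb[OF p q K K]) (use F_lipschitz[of _ _ 0 0] F_zero in auto)
  qed (simp_all add: ph_space_vanishes[OF f_ph] ph_space_vanishes[OF g_ph] F_zero
      ph_space_homog[OF f_ph] ph_space_homog[OF g_ph] F_homog)
  moreover have "\<exists>k\<in>fbl_gen. fbl_norm (\<lambda>h. F (f h) (g h) - k h) < ereal e" if e: "0 < e" for e
  proof -
    define d where "d = e / (2 * (K + 1))"
    have d: "0 < d" "2 * K * d < e"
      using e K by (auto simp: d_def field_simps)
    obtain f' p' where f': "f' \<in> fbl_gen" "p' < d" "fbl_norm (\<lambda>h. f h - f' h) \<le> ereal p'"
      using FBL_approx[OF f d(1)] by blast
    obtain g' q' where g': "g' \<in> fbl_gen" "q' < d" "fbl_norm (\<lambda>h. g h - g' h) \<le> ereal q'"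
      using FBL_approx[OF g d(1)] by blast
    have "fbl_norm (\<lambda>h. F (f h) (g h) - F (f' h) (g' h)) \<le> ereal (K * p' + K * q')"
      by (rule fbl_norm_le_lincomb[OF f'(3) g'(3) K K]) (simp add: F_lipschitz)
    moreover have "K * p' + K * q' < e"
      using mult_left_mono[OF less_imp_le[OF f'(2)] K] mult_left_mono[OF less_imp_le[OF g'(2)] K] d(2)
      by linarith
    ultimately show ?thesis
      using F_gen[OF f'(1) g'(1)] by (intro bexI) (auto intro: le_less_trans)
  qed
  ultimately show ?thesis unfolding FBL_def by blast
qed

lemma FBL_add: "f \<in> FBL \<Longrightarrow> g \<in> FBL \<Longrightarrow> (\<lambda>h. f h + g h) \<in> FBL"
  by (rule FBL_binop[where F = "(+)" and K = 1]) (auto intro: fbl_gen.gen_add simp: algebra_simps)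

lemma FBL_scale: "f \<in> FBL \<Longrightarrow> (\<lambda>h. c * f h) \<in> FBL"
  by (rule FBL_binop[where F = "\<lambda>a b. c * a" and K = "\<bar>c\<bar>" and g = f])
    (auto intro: fbl_gen.gen_scale simp: abs_mult right_diff_distrib[symmetric])

lemma FBL_max:
  assumes "f \<in> FBL" "g \<in> FBL"
  shows "(\<lambda>h. max (f h) (g h)) \<in> FBL"
proof (rule FBL_binop[where F = max and K = 1])
  show "\<bar>max a b - max a' b'\<bar> \<le> 1 * \<bar>a - a'\<bar> + 1 * \<bar>b - b'\<bar>" for a b a' b' :: real
    by (auto simp: max_def)
qed (use assms in \<open>auto simp: max_mult_distrib_left intro: fbl_gen.gen_max\<close>)

lemma FBL_min:
  assumes "f \<in> FBL" "g \<in> FBL"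
  shows "(\<lambda>h. min (f h) (g h)) \<in> FBL"
proof (rule FBL_binop[where F = min and K = 1])
  show "\<bar>min a b - min a' b'\<bar> \<le> 1 * \<bar>a - a'\<bar> + 1 * \<bar>b - b'\<bar>" for a b a' b' :: real
    by (auto simp: min_def)
qed (use assms in \<open>auto simp: min_mult_distrib_left intro: fbl_gen.gen_min\<close>)

lemma FBL_uminus: "f \<in> FBL \<Longrightarrow> (\<lambda>h. - f h) \<in> FBL"
  using FBL_scale[of f "-1"] by simp

lemma FBL_diff: "f \<in> FBL \<Longrightarrow> g \<in> FBL \<Longrightarrow> (\<lambda>h. f h - g h) \<in> FBL"
  using FBL_add[OF _ FBL_uminus[of g], of f] by simp

lemma fbl_norm_delta_le_1: "fbl_norm (delta x) \<le> 1"
  unfolding one_ereal_def by (rule fbl_norm_leI) (simp add: fbl_admissible_def delta_def)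

lemma delta_FBL: "delta x \<in> FBL"
proof -
  have "delta x \<in> ph_space"
    by (rule ph_spaceI[OF _ _ fbl_norm_delta_le_1[unfolded one_ereal_def]]) (auto simp: delta_def)
  moreover have "fbl_norm (\<lambda>h. delta x h - delta x h) \<le> ereal 0"
    by (rule fbl_norm_leI) simp
  then have "fbl_norm (\<lambda>h. delta x h - delta x h) < ereal e" if "0 < e" for e
    using that by (simp add: le_less_trans)
  ultimately show ?thesis unfolding FBL_def using fbl_gen.gen_delta by blast
qed

lemma fbl_gen_FBL: "g \<in> fbl_gen \<Longrightarrow> g \<in> FBL"
  by (induction rule: fbl_gen.induct) (auto intro: delta_FBL FBL_add FBL_scale FBL_max FBL_min)

lemma delta_sup: "delta (sup a b) = (\<lambda>h. max (delta a h) (delta b h))"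
  unfolding delta_def lstar_def by auto

lemma delta_inf: "delta (inf a b) = (\<lambda>h. min (delta a h) (delta b h))"
  unfolding delta_def lstar_def by auto

lemma continuous_on_fbl_gen: "g \<in> fbl_gen \<Longrightarrow> continuous_on lstar g"
proof (induction rule: fbl_gen.induct)
  case (gen_delta x)
  have "continuous_on lstar (\<lambda>h::'a \<Rightarrow> real. h x)"
    by (rule continuous_on_subset[OF continuous_on_product_coordinates]) simp
  then show ?case
    by (rule continuous_on_cong[THEN iffD1, rotated 2]) (auto simp: delta_def)
qed (auto intro!: continuous_intros)

lemma continuous_on_FBL:
  assumes f: "f \<in> FBL"
  shows "continuous_on lstar f"
proof -
  have "\<forall>n. \<exists>g\<in>fbl_gen. fbl_norm (\<lambda>h. f h - g h) < ereal (inverse (real (Suc n)))"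
    using f unfolding FBL_def by simp
  then obtain G where G: "\<And>n. G n \<in> fbl_gen"
    "\<And>n. fbl_norm (\<lambda>h. f h - G n h) < ereal (inverse (real (Suc n)))"
    by metis
  have "uniform_limit lstar G f sequentially"
  proof (rule uniform_limitI)
    fix e :: real assume "0 < e"
    then obtain N where N: "inverse (real (Suc N)) < e" using reals_Archimedean by blast
    have "dist (G n h) (f h) < e" if "N \<le> n" "h \<in> lstar" for n h
    proof -
      have "\<bar>f h - G n h\<bar> < inverse (real (Suc n))"
        using abs_less_of_fbl_norm_less[OF that(2) G(2)] by simp
      moreover have "inverse (real (Suc n)) \<le> inverse (real (Suc N))"
        using that(1) by (intro le_imp_inverse_le) auto
      moreover have "dist (G n h) (f h) = \<bar>f h - G n h\<bar>"
        by (simp add: dist_real_def abs_minus_commute)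
      ultimately show ?thesis using N by linarith
    qed
    then show "\<forall>\<^sub>F n in sequentially. \<forall>h\<in>lstar. dist (G n h) (f h) < e"
      unfolding eventually_sequentially by blast
  qed
  then show ?thesis
    by (rule uniform_limit_theorem[rotated]) (auto intro: always_eventually continuous_on_fbl_gen G(1))
qed

section \<open>Contractive real-valued lattice homomorphisms are point evaluations\<close>

definition fbl_lattice_functional :: "((('a::distrib_lattice \<Rightarrow> real) \<Rightarrow> real) \<Rightarrow> real) \<Rightarrow> bool" where
  "fbl_lattice_functional \<phi> \<longleftrightarrow>
     (\<forall>f\<in>FBL. \<forall>g\<in>FBL. \<phi> (\<lambda>h. f h + g h) = \<phi> f + \<phi> g)
   \<and> (\<forall>c. \<forall>f\<in>FBL. \<phi> (\<lambda>h. c * f h) = c * \<phi> f)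
   \<and> (\<forall>f\<in>FBL. \<forall>g\<in>FBL. \<phi> (\<lambda>h. max (f h) (g h)) = max (\<phi> f) (\<phi> g))"

lemma fbl_lattice_functional_eval: "fbl_lattice_functional (\<lambda>f. f z)"
  unfolding fbl_lattice_functional_def by simp

lemma
  assumes "fbl_lattice_functional \<phi>"
  shows fbl_lattice_functional_add: "f \<in> FBL \<Longrightarrow> g \<in> FBL \<Longrightarrow> \<phi> (\<lambda>h. f h + g h) = \<phi> f + \<phi> g"
    and fbl_lattice_functional_scale: "f \<in> FBL \<Longrightarrow> \<phi> (\<lambda>h. c * f h) = c * \<phi> f"
    and fbl_lattice_functional_max:
      "f \<in> FBL \<Longrightarrow> g \<in> FBL \<Longrightarrow> \<phi> (\<lambda>h. max (f h) (g h)) = max (\<phi> f) (\<phi> g)"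
  using assms unfolding fbl_lattice_functional_def by blast+

lemma fbl_lattice_functional_uminus:
  "fbl_lattice_functional \<phi> \<Longrightarrow> f \<in> FBL \<Longrightarrow> \<phi> (\<lambda>h. - f h) = - \<phi> f"
  using fbl_lattice_functional_scale[of \<phi> f "-1"] by simp

lemma fbl_lattice_functional_diff:
  assumes \<phi>: "fbl_lattice_functional \<phi>" and f: "f \<in> FBL" and g: "g \<in> FBL"
  shows "\<phi> (\<lambda>h. f h - g h) = \<phi> f - \<phi> g"
proof -
  have "\<phi> (\<lambda>h. f h - g h) = \<phi> (\<lambda>h. f h + - g h)" by simp
  also have "\<dots> = \<phi> f - \<phi> g"
    using fbl_lattice_functional_add[OF \<phi> f FBL_uminus[OF g]]
      fbl_lattice_functional_uminus[OF \<phi> g] by simp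
  finally show ?thesis .
qed

lemma fbl_lattice_functional_min:
  assumes \<phi>: "fbl_lattice_functional \<phi>" and f: "f \<in> FBL" and g: "g \<in> FBL"
  shows "\<phi> (\<lambda>h. min (f h) (g h)) = min (\<phi> f) (\<phi> g)"
proof -
  have "(\<lambda>h. min (f h) (g h)) = (\<lambda>h. - max (- f h) (- g h))"
    by (auto simp: fun_eq_iff min_def max_def)
  then have "\<phi> (\<lambda>h. min (f h) (g h)) = \<phi> (\<lambda>h. - max (- f h) (- g h))"
    by simp
  also have "\<dots> = - max (\<phi> (\<lambda>h. - f h)) (\<phi> (\<lambda>h. - g h))"
    using f g by (simp add: fbl_lattice_functional_uminus[OF \<phi>] fbl_lattice_functional_max[OF \<phi>]
        FBL_max FBL_uminus)
  also have "\<dots> = min (\<phi> f) (\<phi> g)"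
    using f g by (simp add: fbl_lattice_functional_uminus[OF \<phi>] min_def max_def)
  finally show ?thesis .
qed

lemma fbl_lattice_functionals_eq_on_fbl_gen:
  assumes \<phi>: "fbl_lattice_functional \<phi>" and \<psi>: "fbl_lattice_functional \<psi>"
    and delta: "\<And>x. \<phi> (delta x) = \<psi> (delta x)"
    and g: "g \<in> fbl_gen"
  shows "\<phi> g = \<psi> g"
  using g
proof (induction rule: fbl_gen.induct)
  case (gen_delta x)
  show ?case by (rule delta)
next
  case (gen_add f g)
  then show ?case
    by (simp add: fbl_gen_FBL fbl_lattice_functional_add[OF \<phi>] fbl_lattice_functional_add[OF \<psi>])
next
  case (gen_scale f c)
  then show ?case
    by (simp add: fbl_gen_FBL fbl_lattice_functional_scale[OF \<phi>] fbl_lattice_functional_scale[OF \<psi>])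
next
  case (gen_max f g)
  then show ?case
    by (simp add: fbl_gen_FBL fbl_lattice_functional_max[OF \<phi>] fbl_lattice_functional_max[OF \<psi>])
next
  case (gen_min f g)
  then show ?case
    by (simp add: fbl_gen_FBL fbl_lattice_functional_min[OF \<phi>] fbl_lattice_functional_min[OF \<psi>])
qed

lemma contractive_fbl_lattice_functional_diff_less:
  assumes \<phi>: "fbl_lattice_functional \<phi>" "\<forall>f\<in>FBL. ereal \<bar>\<phi> f\<bar> \<le> fbl_norm f"
    and f: "f \<in> FBL" and g: "g \<in> FBL" and less: "fbl_norm (\<lambda>h. f h - g h) < ereal e"
  shows "\<bar>\<phi> f - \<phi> g\<bar> < e"
proof -
  have "ereal \<bar>\<phi> (\<lambda>h. f h - g h)\<bar> \<le> fbl_norm (\<lambda>h. f h - g h)"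
    using \<phi>(2) FBL_diff[OF f g] by blast
  then have "ereal \<bar>\<phi> f - \<phi> g\<bar> < ereal e"
    unfolding fbl_lattice_functional_diff[OF \<phi>(1) f g] using less by (rule le_less_trans)
  then show ?thesis by simp
qed

lemma contractive_fbl_lattice_functionals_eq_on_closure:
  assumes \<phi>: "fbl_lattice_functional \<phi>" "\<forall>f\<in>FBL. ereal \<bar>\<phi> f\<bar> \<le> fbl_norm f"
    and \<psi>: "fbl_lattice_functional \<psi>" "\<forall>f\<in>FBL. ereal \<bar>\<psi> f\<bar> \<le> fbl_norm f"
    and D: "D \<subseteq> FBL" "\<forall>g\<in>D. \<phi> g = \<psi> g"
    and f: "f \<in> FBL" and approx: "\<forall>e>0. \<exists>g\<in>D. fbl_norm (\<lambda>h. f h - g h) < ereal e"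
  shows "\<phi> f = \<psi> f"
proof (rule dense_eq0_I[of "\<phi> f - \<psi> f", simplified])
  fix e :: real assume "0 < e"
  then obtain g where g: "g \<in> D" "fbl_norm (\<lambda>h. f h - g h) < ereal (e / 2)"
    using approx half_gt_zero by blast
  then have "\<bar>\<phi> f - \<phi> g\<bar> < e / 2" "\<bar>\<psi> f - \<psi> g\<bar> < e / 2"
    using D(1) contractive_fbl_lattice_functional_diff_less[OF \<phi> f]
      contractive_fbl_lattice_functional_diff_less[OF \<psi> f] by blast+
  moreover have "\<phi> g = \<psi> g" using D(2) g(1) by blast
  ultimately show "\<bar>\<phi> f - \<psi> f\<bar> \<le> e" by linarith
qed

lemma contractive_fbl_lattice_functionals_eq:
  assumes \<phi>: "fbl_lattice_functional \<phi>" "\<forall>f\<in>FBL. ereal \<bar>\<phi> f\<bar> \<le> fbl_norm f"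
    and \<psi>: "fbl_lattice_functional \<psi>" "\<forall>f\<in>FBL. ereal \<bar>\<psi> f\<bar> \<le> fbl_norm f"
    and delta: "\<And>x. \<phi> (delta x) = \<psi> (delta x)"
    and f: "f \<in> FBL"
  shows "\<phi> f = \<psi> f"
proof (rule contractive_fbl_lattice_functionals_eq_on_closure[OF \<phi> \<psi> _ _ f])
  show "fbl_gen \<subseteq> FBL" "\<forall>g\<in>fbl_gen. \<phi> g = \<psi> g"
    using fbl_gen_FBL fbl_lattice_functionals_eq_on_fbl_gen[OF \<phi>(1) \<psi>(1) delta] by blast+
  show "\<forall>e>0. \<exists>g\<in>fbl_gen. fbl_norm (\<lambda>h. f h - g h) < ereal e"
    using f unfolding FBL_def by blast
qed

lemma contractive_fbl_lattice_functional_point_in_lstar: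
  assumes \<phi>: "fbl_lattice_functional \<phi>" "\<forall>f\<in>FBL. ereal \<bar>\<phi> f\<bar> \<le> fbl_norm f"
  shows "(\<lambda>x. \<phi> (delta x)) \<in> lstar"
proof -
  have "\<bar>\<phi> (delta x)\<bar> \<le> 1" for x
    using \<phi>(2) delta_FBL fbl_norm_delta_le_1 by (metis ereal_less_eq(3) one_ereal_def order_trans)
  moreover have "\<phi> (delta (sup a b)) = max (\<phi> (delta a)) (\<phi> (delta b))" for a b
    using \<phi>(1) delta_FBL unfolding delta_sup fbl_lattice_functional_def by blast
  moreover have "\<phi> (delta (inf a b)) = min (\<phi> (delta a)) (\<phi> (delta b))" for a b
    unfolding delta_inf by (rule fbl_lattice_functional_min[OF \<phi>(1) delta_FBL delta_FBL])
  ultimately show ?thesis unfolding lstar_def by (auto simp: abs_le_iff)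
qed

lemma contractive_fbl_lattice_functional_eq_eval:
  assumes \<phi>: "fbl_lattice_functional \<phi>" "\<forall>f\<in>FBL. ereal \<bar>\<phi> f\<bar> \<le> fbl_norm f"
    and f: "f \<in> FBL"
  shows "\<phi> f = f (\<lambda>x. \<phi> (delta x))"
proof (rule contractive_fbl_lattice_functionals_eq[OF \<phi> fbl_lattice_functional_eval _ _ f])
  have z: "(\<lambda>x. \<phi> (delta x)) \<in> lstar"
    by (rule contractive_fbl_lattice_functional_point_in_lstar[OF \<phi>])
  then show "\<forall>f\<in>FBL. ereal \<bar>f (\<lambda>x. \<phi> (delta x))\<bar> \<le> fbl_norm f"
    by (simp add: abs_le_fbl_norm)
  show "\<phi> (delta x) = delta x (\<lambda>x. \<phi> (delta x))" for x
    using z by (simp add: delta_def)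
qed

section \<open>The map \<Phi>\<close>

lemma
  assumes "fbl_lattice_hom T"
  shows fbl_lattice_hom_FBL: "f \<in> FBL \<Longrightarrow> T f \<in> FBL"
    and fbl_lattice_hom_add: "f \<in> FBL \<Longrightarrow> g \<in> FBL \<Longrightarrow> T (\<lambda>h. f h + g h) = (\<lambda>k. T f k + T g k)"
    and fbl_lattice_hom_scale: "f \<in> FBL \<Longrightarrow> T (\<lambda>h. c * f h) = (\<lambda>k. c * T f k)"
    and fbl_lattice_hom_max:
      "f \<in> FBL \<Longrightarrow> g \<in> FBL \<Longrightarrow> T (\<lambda>h. max (f h) (g h)) = (\<lambda>k. max (T f k) (T g k))"
  using assms unfolding fbl_lattice_hom_def by blast+

lemma fbl_lattice_functional_hom_eval:
  "fbl_lattice_hom T \<Longrightarrow> fbl_lattice_functional (\<lambda>f. T f y)"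
  unfolding fbl_lattice_functional_def
  by (simp add: fbl_lattice_hom_add fbl_lattice_hom_scale fbl_lattice_hom_max)

lemma fbl_norm_le_op_norm: "f \<in> FBL \<Longrightarrow> fbl_norm f \<le> 1 \<Longrightarrow> fbl_norm (T f) \<le> op_norm T"
  unfolding op_norm_def by (rule SUP_upper) simp

lemma fbl_norm_hom_le_of_op_norm_le_1:
  assumes T: "fbl_lattice_hom T" and op: "op_norm T \<le> 1" and f: "f \<in> FBL"
  shows "fbl_norm (T f) \<le> fbl_norm f"
proof (rule ereal_le_real)
  fix z assume z: "fbl_norm f \<le> ereal z"
  show "fbl_norm (T f) \<le> ereal z"
  proof (rule ereal_le_epsilon2)
    fix e :: real assume "0 < e"
    moreover have "0 \<le> z" using order_trans[OF fbl_norm_nonneg z] by simp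
    ultimately have c: "0 < z + e" by simp
    define v where "v = (\<lambda>h. (1 / (z + e)) * f h)"
    have v: "v \<in> FBL" unfolding v_def by (rule FBL_scale[OF f])
    have "fbl_norm v \<le> ereal ((1 / (z + e)) * z)"
      by (rule fbl_norm_le_scaled[OF z]) (use c in \<open>auto simp: v_def abs_mult\<close>)
    also have "\<dots> \<le> 1" using c \<open>0 < e\<close> by (simp add: field_simps)
    finally have "fbl_norm (T v) \<le> 1"
      using order_trans[OF fbl_norm_le_op_norm[OF v] op] by (simp add: one_ereal_def)
    then have Tv: "fbl_norm (T v) \<le> ereal 1" by (simp add: one_ereal_def)
    have Tf: "T f = (\<lambda>k. (z + e) * T v k)"
      using fbl_lattice_hom_scale[OF T v, of "z + e"] c by (simp add: v_def)
    have "fbl_norm (T f) \<le> ereal ((z + e) * 1)"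
      unfolding Tf by (rule fbl_norm_le_scaled[OF Tv]) (use c in \<open>auto simp: abs_mult\<close>)
    then show "fbl_norm (T f) \<le> ereal z + ereal e" by simp
  qed
qed

context
  fixes T :: "(('a::distrib_lattice \<Rightarrow> real) \<Rightarrow> real) \<Rightarrow> (('b::distrib_lattice \<Rightarrow> real) \<Rightarrow> real)"
    and y :: "'b \<Rightarrow> real"
  assumes T: "fbl_lattice_hom T" and contractive: "\<forall>f\<in>FBL. fbl_norm (T f) \<le> fbl_norm f"
    and y: "y \<in> lstar"
begin

lemma abs_hom_le_fbl_norm: "\<forall>f\<in>FBL. ereal \<bar>T f y\<bar> \<le> fbl_norm f"
proof
  fix f :: "('a \<Rightarrow> real) \<Rightarrow> real" assume "f \<in> FBL"
  have "ereal \<bar>T f y\<bar> \<le> fbl_norm (T f)" by (rule abs_le_fbl_norm[OF y])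
  also have "\<dots> \<le> fbl_norm f" using contractive \<open>f \<in> FBL\<close> by blast
  finally show "ereal \<bar>T f y\<bar> \<le> fbl_norm f" .
qed

lemma Phi_in_lstar: "Phi T y \<in> lstar"
  unfolding Phi_def
  using contractive_fbl_lattice_functional_point_in_lstar[OF fbl_lattice_functional_hom_eval[OF T]
      abs_hom_le_fbl_norm]
  by simp

lemma hom_eq_eval_Phi: "f \<in> FBL \<Longrightarrow> T f y = f (Phi T y)"
  unfolding Phi_def
  by (rule contractive_fbl_lattice_functional_eq_eval[OF fbl_lattice_functional_hom_eval[OF T] abs_hom_le_fbl_norm])

end

lemma continuous_on_Phi: "fbl_lattice_hom T \<Longrightarrow> continuous_on lstar (Phi T)"
  unfolding Phi_def
  by (rule continuous_on_coordinatewise_then_product)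
    (simp add: continuous_on_FBL fbl_lattice_hom_FBL delta_FBL)

lemma inj_on_Phi:
  assumes T: "fbl_lattice_hom T"
    and dense: "\<forall>g\<in>FBL. \<forall>e>0. \<exists>f\<in>FBL. fbl_norm (\<lambda>k. g k - T f k) < ereal e"
    and op: "op_norm T \<le> 1"
  shows "inj_on (Phi T) lstar"
proof (rule inj_onI)
  fix y1 y2 :: "'b \<Rightarrow> real"
  assume y1: "y1 \<in> lstar" and y2: "y2 \<in> lstar" and eq: "Phi T y1 = Phi T y2"
  have contractive: "\<forall>f\<in>FBL. fbl_norm (T f) \<le> fbl_norm f"
    using fbl_norm_hom_le_of_op_norm_le_1[OF T op] by blast
  have agree: "\<forall>g\<in>T ` FBL. g y1 = g y2"
    using hom_eq_eval_Phi[OF T contractive y1] hom_eq_eval_Phi[OF T contractive y2] eq by auto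
  have "delta b y1 = delta b y2" for b
  proof (rule contractive_fbl_lattice_functionals_eq_on_closure[OF fbl_lattice_functional_eval _
        fbl_lattice_functional_eval _ _ agree delta_FBL])
    show "\<forall>f\<in>FBL. ereal \<bar>f y1\<bar> \<le> fbl_norm f" "\<forall>f\<in>FBL. ereal \<bar>f y2\<bar> \<le> fbl_norm f"
      using abs_le_fbl_norm[OF y1] abs_le_fbl_norm[OF y2] by blast+
    show "T ` FBL \<subseteq> FBL" using fbl_lattice_hom_FBL[OF T] by blast
    show "\<forall>e>0. \<exists>g\<in>T ` FBL. fbl_norm (\<lambda>h. delta b h - g h) < ereal e"
      using dense delta_FBL by blast
  qed
  then show "y1 = y2" using y1 y2 by (simp add: delta_def fun_eq_iff)
qed

lemma fbl_lattice_hom_inv_into: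
  assumes T: "fbl_lattice_hom T" and bij: "bij_betw T FBL FBL"
  shows "fbl_lattice_hom (inv_into FBL T)"
proof -
  define S where "S = inv_into FBL T"
  have S_FBL: "S f \<in> FBL" and T_S: "T (S f) = f" if "f \<in> FBL" for f
    using that bij_betw_apply[OF bij_betw_inv_into[OF bij]] bij_betw_inv_into_right[OF bij]
    unfolding S_def by simp_all
  have S_eqI: "S g = f" if "f \<in> FBL" "T f = g" for f g
    using that bij_betw_inv_into_left[OF bij] unfolding S_def by blast
  show ?thesis
    unfolding S_def[symmetric] fbl_lattice_hom_def
  proof (intro conjI ballI allI)
    fix f g :: "('b \<Rightarrow> real) \<Rightarrow> real" assume f: "f \<in> FBL" and g: "g \<in> FBL"
    show "S (\<lambda>h. f h + g h) = (\<lambda>k. S f k + S g k)"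
      by (rule S_eqI[OF FBL_add[OF S_FBL[OF f] S_FBL[OF g]]])
        (simp add: fbl_lattice_hom_add[OF T] S_FBL f g T_S)
    show "S (\<lambda>h. max (f h) (g h)) = (\<lambda>k. max (S f k) (S g k))"
      by (rule S_eqI[OF FBL_max[OF S_FBL[OF f] S_FBL[OF g]]])
        (simp add: fbl_lattice_hom_max[OF T] S_FBL f g T_S)
    show "S (\<lambda>h. c * f h) = (\<lambda>k. c * S f k)" for c
      by (rule S_eqI[OF FBL_scale[OF S_FBL[OF f]]]) (simp add: fbl_lattice_hom_scale[OF T] S_FBL f T_S)
    show "S f \<in> FBL" by (rule S_FBL[OF f])
  qed
qed

lemma Phi_Phi_inverse:
  assumes T: "fbl_lattice_hom T" and S: "fbl_lattice_hom S"
    and S_contractive: "\<forall>f\<in>FBL. fbl_norm (S f) \<le> fbl_norm f"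
    and S_T: "\<forall>f\<in>FBL. S (T f) = f"
    and x: "x \<in> lstar"
  shows "Phi T (Phi S x) = x"
proof
  fix a
  have "Phi T (Phi S x) a = S (T (delta a)) x"
    using hom_eq_eval_Phi[OF S S_contractive x fbl_lattice_hom_FBL[OF T delta_FBL]]
    by (simp add: Phi_def)
  also have "\<dots> = delta a x" by (simp only: bspec[OF S_T delta_FBL])
  also have "\<dots> = x a" using x by (simp add: delta_def)
  finally show "Phi T (Phi S x) a = x a" .
qed

lemma bij_betw_Phi:
  assumes T: "fbl_lattice_hom T" and bij: "bij_betw T FBL FBL"
    and iso: "\<forall>f\<in>FBL. fbl_norm (T f) = fbl_norm f"
  shows "bij_betw (Phi T) lstar lstar"
    and "\<forall>h\<in>lstar. Phi (inv_into FBL T) h = inv_into lstar (Phi T) h"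
proof -
  define S where "S = inv_into FBL T"
  have S: "fbl_lattice_hom S" unfolding S_def by (rule fbl_lattice_hom_inv_into[OF T bij])
  have S_FBL: "S f \<in> FBL" if "f \<in> FBL" for f
    using that bij_betw_apply[OF bij_betw_inv_into[OF bij]] unfolding S_def by simp
  have T_S: "\<forall>f\<in>FBL. T (S f) = f"
    using bij_betw_inv_into_right[OF bij] unfolding S_def by simp
  have S_T: "\<forall>f\<in>FBL. S (T f) = f"
    using bij_betw_inv_into_left[OF bij] unfolding S_def by simp
  have T_contractive: "\<forall>f\<in>FBL. fbl_norm (T f) \<le> fbl_norm f" using iso by simp
  have S_contractive: "\<forall>f\<in>FBL. fbl_norm (S f) \<le> fbl_norm f"
  proof
    fix f :: "('b \<Rightarrow> real) \<Rightarrow> real" assume f: "f \<in> FBL"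
    have "fbl_norm (T (S f)) = fbl_norm (S f)" using iso S_FBL[OF f] by blast
    then show "fbl_norm (S f) \<le> fbl_norm f" using T_S f by simp
  qed
  have TS: "Phi T (Phi S x) = x" if "x \<in> lstar" for x
    by (rule Phi_Phi_inverse[where T = T and S = S, OF T S S_contractive S_T that])
  have ST: "Phi S (Phi T y) = y" if "y \<in> lstar" for y
    by (rule Phi_Phi_inverse[where T = S and S = T, OF S T T_contractive T_S that])
  show bij_Phi: "bij_betw (Phi T) lstar lstar"
    by (rule bij_betw_byWitness[where f' = "Phi S"])
      (use TS ST Phi_in_lstar[OF T T_contractive] Phi_in_lstar[OF S S_contractive] in auto)
  show "\<forall>h\<in>lstar. Phi (inv_into FBL T) h = inv_into lstar (Phi T) h"
    unfolding S_def[symmetric]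
    using bij_betw_inv_into_left[OF bij_Phi Phi_in_lstar[OF S S_contractive]] TS by simp
qed

lemma SUP_sum_abs_lstar_finite:
  fixes m :: nat
  assumes "\<forall>i<m. ys i \<in> lstar"
  obtains S where "(SUP y. ereal (\<Sum>i<m. \<bar>ys i y\<bar>)) = ereal S"
proof -
  have "(\<Sum>i<m. \<bar>ys i y\<bar>) \<le> (\<Sum>i<m. 1)" for y
    using assms by (intro sum_mono) (simp add: lstar_abs_le_1)
  then have "(SUP y. ereal (\<Sum>i<m. \<bar>ys i y\<bar>)) \<le> ereal m"
    by (intro SUP_least) simp
  moreover have "0 \<le> (SUP y. ereal (\<Sum>i<m. \<bar>ys i y\<bar>))"
    by (rule SUP_upper2[of undefined]) (simp_all add: sum_nonneg)
  ultimately show ?thesis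
    using that by (cases "SUP y. ereal (\<Sum>i<m. \<bar>ys i y\<bar>)") auto
qed

lemma Phi_sum_abs_le:
  fixes m :: nat
  assumes T: "fbl_lattice_hom T" and ys: "\<forall>i<m. ys i \<in> lstar"
  shows "(SUP x. ereal (\<Sum>i<m. \<bar>Phi T (ys i) x\<bar>)) \<le> op_norm T * (SUP y. ereal (\<Sum>i<m. \<bar>ys i y\<bar>))"
proof -
  obtain S where S: "(SUP y. ereal (\<Sum>i<m. \<bar>ys i y\<bar>)) = ereal S"
    using SUP_sum_abs_lstar_finite[OF ys] .
  have bound: "(\<Sum>i<m. \<bar>ys i y\<bar>) \<le> S" for y
    using SUP_upper[of y UNIV "\<lambda>y. ereal (\<Sum>i<m. \<bar>ys i y\<bar>)"] S by simp
  then have "0 \<le> S" by (meson abs_ge_zero order_trans sum_nonneg)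
  show ?thesis
    unfolding S
  proof (rule SUP_least)
    fix x
    have T_delta: "T (delta x) \<in> FBL" by (rule fbl_lattice_hom_FBL[OF T delta_FBL])
    then have "pos_homog (T (delta x))" using FBL_ph_space unfolding ph_space_def by blast
    then have "ereal (\<Sum>i<m. \<bar>Phi T (ys i) x\<bar>) \<le> fbl_norm (T (delta x)) * ereal S"
      unfolding Phi_def using ys bound by (rule sum_abs_le_fbl_norm_mult)
    also have "\<dots> \<le> op_norm T * ereal S"
      by (rule ereal_mult_right_mono[OF fbl_norm_le_op_norm[OF delta_FBL fbl_norm_delta_le_1]])
        (simp add: \<open>0 \<le> S\<close>)
    finally show "ereal (\<Sum>i<m. \<bar>Phi T (ys i) x\<bar>) \<le> op_norm T * ereal S" .
  qed
qed

theorem mainTheorem18: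
  fixes T :: "(('a::distrib_lattice \<Rightarrow> real) \<Rightarrow> real) \<Rightarrow> (('b::distrib_lattice \<Rightarrow> real) \<Rightarrow> real)"
  assumes "fbl_lattice_hom T"
  shows "continuous_on lstar (Phi T)
    \<and> ((\<forall>g\<in>FBL. \<forall>e>0. \<exists>f\<in>FBL. fbl_norm (\<lambda>k. g k - T f k) < ereal e) \<and> op_norm T \<le> 1
          \<longrightarrow> inj_on (Phi T) lstar)
    \<and> (bij_betw T FBL FBL \<and> (\<forall>f\<in>FBL. fbl_norm (T f) = fbl_norm f)
          \<longrightarrow> bij_betw (Phi T) lstar lstar
              \<and> (\<forall>h\<in>lstar. Phi (inv_into FBL T) h = inv_into lstar (Phi T) h))
    \<and> (\<forall>(m::nat) ys. (\<forall>i<m. ys i \<in> lstar) \<longrightarrow>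
          (SUP x. ereal (\<Sum>i<m. \<bar>Phi T (ys i) x\<bar>))
            \<le> op_norm T * (SUP y. ereal (\<Sum>i<m. \<bar>ys i y\<bar>)))"
  using continuous_on_Phi[OF assms] inj_on_Phi[OF assms] bij_betw_Phi[OF assms]
    Phi_sum_abs_le[OF assms] by blast

end
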